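(* Let $p_1,\dots,p_{n}$ be the $p$-values of the tested nodes at a given level $l$ of a rooted tree, and fix a node $j$. Let $T_1,\dots,T_t$ be the subtrees rooted at the ancestors of node $j$ (each containing node $j$), let $p^{(-j)}_{T_s}$ be the set of $p$-values of the tested level-$l$ nodes in $T_s$ other than $j$, and define $$\omega_j=1+\sum_{s=1}^t\mathbb{I}\big(p_j>p^{(-j)}_{T_s}\big),$$ where $p_j>p^{(-j)}_{T_s}$ means that $p_j$ exceeds every element of $p^{(-j)}_{T_s}$. Assume $p_j$ is uniformly distributed on $[0,1]$ and independent of all other $p$-values $(p_i)_{i\ne j}$ at level $l$. Let $\mathcal B^{(-j)}$ denote the event that the vector of all other $p$-values $(p_i)_{i\neq j}$ belongs to a given Borel set. Then for every $\alpha\in(0,1)$, $$\mathbb{E}\big[\omega_j\,\mathbb{I}(\mathcal B^{(-j)},\,p_j\le\alpha)\big]\le\frac{\alpha}{1-\alpha}\,\mathbb{E}\big[\omega_j\,\mathbb{I}(\mathcal B^{(-j)},\,p_j>\alpha)\big].$$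
   Context: A subtree rooted at a node consists of that node and all its descendants. The quantity $\omega_j$ counts node $j$ together with each ancestor of $j$ that would be detected if node $j$ were rejected along with all tested level-$l$ nodes with smaller $p$-values. *)

theory Defs
  imports "HOL-Probability.Probability"
begin

definition rooted_tree :: "'a set \<Rightarrow> 'a \<Rightarrow> ('a \<Rightarrow> 'a) \<Rightarrow> bool" where
  "rooted_tree V r par \<longleftrightarrow> finite V \<and> r \<in> V \<and> par r = r \<and> (\<forall>v\<in>V. par v \<in> V)
     \<and> (\<forall>v\<in>V. \<exists>k. (par ^^ k) v = r)"

definition ancestors :: "('a \<Rightarrow> 'a) \<Rightarrow> 'a \<Rightarrow> 'a set" where
  "ancestors par j = {(par ^^ k) j | k. k \<ge> 1} - {j}"

definition subtree :: "'a set \<Rightarrow> ('a \<Rightarrow> 'a) \<Rightarrow> 'a \<Rightarrow> 'a set" where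
  "subtree V par a = {v \<in> V. \<exists>k. (par ^^ k) v = a}"

definition depth :: "('a \<Rightarrow> 'a) \<Rightarrow> 'a \<Rightarrow> 'a \<Rightarrow> nat" where
  "depth par r v = (LEAST k. (par ^^ k) v = r)"

definition omega :: "'a set \<Rightarrow> ('a \<Rightarrow> 'a) \<Rightarrow> 'a set \<Rightarrow> ('a \<Rightarrow> 'm \<Rightarrow> real) \<Rightarrow> 'a \<Rightarrow> 'm \<Rightarrow> real" where
  "omega V par L p j x = 1 + (\<Sum>a\<in>ancestors par j.
      (if (\<forall>i \<in> subtree V par a \<inter> L - {j}. p i x < p j x) then 1 else 0))"

end

theory Submission
  imports Defs
begin

text \<open>Freeze all p-values except p_j and view \<omega>_j as a function of p_j: it is nondecreasing
  (each indicator can only switch on as p_j grows). Comparing \<omega>_j with its value at the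
  threshold p_j = \<alpha>, which depends on the other p-values only, the inequality follows from
  independence: the frozen value has conditional mass \<alpha> on p_j \<le> \<alpha> and 1 - \<alpha> on p_j > \<alpha>.\<close>

lemma (in prob_space) indep_var_threshold_bound:
  assumes indep: "indep_var N1 X N2 Y"
    and A: "A \<in> sets N1"
    and q: "prob (X -` A \<inter> space M) = q" "q < 1"
    and g: "g \<in> borel_measurable N2" "\<And>y. y \<in> space N2 \<Longrightarrow> \<bar>g y\<bar> \<le> C"
    and f: "integrable M f1" "integrable M f2"
    and below: "\<And>x. x \<in> space M \<Longrightarrow> f1 x \<le> g (Y x) * indicator A (X x)"
    and above: "\<And>x. x \<in> space M \<Longrightarrow> g (Y x) * indicator (- A) (X x) \<le> f2 x"
  shows "integral\<^sup>L M f1 \<le> q / (1 - q) * integral\<^sup>L M f2"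
proof -
  have Xm: "X \<in> measurable M N1" and Ym: "Y \<in> measurable M N2"
    using indep by (blast dest: indep_var_rv1 indep_var_rv2)+
  have gY: "integrable M (\<lambda>x. g (Y x))"
    using g Ym by (intro integrable_const_bound[where B=C]) (auto simp: measurable_space)
  have hX: "integrable M (\<lambda>x. indicator A (X x) :: real)"
    using A Xm by (intro integrable_const_bound[where B=1]) (auto simp: indicator_def)
  have "indep_var borel (indicator A \<circ> X) borel (g \<circ> Y)"
    using A g by (intro indep_var_compose[OF indep]) auto
  then have indep': "indep_var borel (\<lambda>x. indicator A (X x) :: real) borel (\<lambda>x. g (Y x))"
    by (simp add: comp_def)
  have "(\<integral>x. indicator A (X x) \<partial>M) = (\<integral>x. indicator (X -` A \<inter> space M) x \<partial>M)"
    by (intro Bochner_Integration.integral_cong) (auto simp: indicator_def)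
  also have "\<dots> = q"
    using q by simp
  finally have "(\<integral>x. indicator A (X x) \<partial>M) = q" .
  then have split: "(\<integral>x. g (Y x) * indicator A (X x) \<partial>M) = q * (\<integral>x. g (Y x) \<partial>M)"
    using indep_var_lebesgue_integral[OF indep' hX gY] by (simp add: mult.commute)
  have gYhX: "integrable M (\<lambda>x. g (Y x) * indicator A (X x))"
    using indep_var_integrable[OF indep' hX gY] by (simp add: mult.commute)
  have "(1 - q) * (\<integral>x. g (Y x) \<partial>M) = (\<integral>x. g (Y x) * indicator (- A) (X x) \<partial>M)"
    using split gY gYhX by (simp add: indicator_compl algebra_simps)
  also have "\<dots> \<le> integral\<^sup>L M f2"
    using gY gYhX f(2) above by (intro integral_mono) (auto simp: indicator_compl algebra_simps)
  finally have complement: "(1 - q) * (\<integral>x. g (Y x) \<partial>M) \<le> integral\<^sup>L M f2" .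
  have "0 \<le> q / (1 - q)"
    using q by auto
  have "integral\<^sup>L M f1 \<le> (\<integral>x. g (Y x) * indicator A (X x) \<partial>M)"
    using f(1) gYhX below by (rule integral_mono)
  also have "\<dots> = q / (1 - q) * ((1 - q) * (\<integral>x. g (Y x) \<partial>M))"
    using split q(2) by simp
  also have "\<dots> \<le> q / (1 - q) * integral\<^sup>L M f2"
    using complement \<open>0 \<le> q / (1 - q)\<close> by (rule mult_left_mono)
  finally show ?thesis .
qed

definition omega_at :: "'a set \<Rightarrow> ('a \<Rightarrow> 'a) \<Rightarrow> 'a set \<Rightarrow> 'a \<Rightarrow> ('a \<Rightarrow> real) \<Rightarrow> real \<Rightarrow> real" where
  "omega_at V par L j y t = 1 + (\<Sum>a\<in>ancestors par j.
      (if (\<forall>i \<in> subtree V par a \<inter> L - {j}. y i < t) then 1 else 0))"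

lemma omega_eq_omega_at:
  "omega V par L p j x = omega_at V par L j (\<lambda>i\<in>L - {j}. p i x) (p j x)"
  unfolding omega_def omega_at_def by simp

lemma omega_at_mono:
  assumes "s \<le> t"
  shows "omega_at V par L j y s \<le> omega_at V par L j y t"
  unfolding omega_at_def using assms by (force intro!: sum_mono intro: less_le_trans)

lemma abs_omega_at_le_card_ancestors: "\<bar>omega_at V par L j y t\<bar> \<le> 1 + card (ancestors par j)"
proof -
  have "0 \<le> omega_at V par L j y t"
    unfolding omega_at_def by (auto intro!: sum_nonneg add_nonneg_nonneg)
  moreover have "omega_at V par L j y t \<le> 1 + card (ancestors par j)"
    unfolding omega_at_def
    using sum_bounded_above[of "ancestors par j" "\<lambda>a. if _ a then 1 else (0::real)" 1] by auto
  ultimately show ?thesis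
    by simp
qed

lemma borel_measurable_omega_at:
  assumes "finite L"
  shows "(\<lambda>y. omega_at V par L j y t) \<in> borel_measurable (PiM (L - {j}) (\<lambda>_. borel))"
proof -
  have "Measurable.pred (PiM (L - {j}) (\<lambda>_. borel)) (\<lambda>y. \<forall>i\<in>subtree V par a \<inter> L - {j}. y i < t)"
    for a
  proof (rule pred_intros_finite(3))
    fix i assume "i \<in> subtree V par a \<inter> L - {j}"
    then have "i \<in> L - {j}" by blast
    then show "Measurable.pred (PiM (L - {j}) (\<lambda>_. borel)) (\<lambda>y. y i < t)" by measurable
  qed (use assms in auto)
  then show ?thesis unfolding omega_at_def by measurable
qed

lemma borel_measurable_omega:
  assumes "finite L" and "\<forall>i\<in>L. p i \<in> borel_measurable M" and "j \<in> L"
  shows "omega V par L p j \<in> borel_measurable M"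
proof -
  have "Measurable.pred M (\<lambda>x. \<forall>i\<in>subtree V par a \<inter> L - {j}. p i x < p j x)" for a
  proof (rule pred_intros_finite(3))
    fix i assume "i \<in> subtree V par a \<inter> L - {j}"
    then have "p i \<in> borel_measurable M" and "p j \<in> borel_measurable M" using assms by auto
    then show "Measurable.pred M (\<lambda>x. p i x < p j x)" by measurable
  qed (use assms in auto)
  then show ?thesis unfolding omega_def by measurable
qed

lemma (in prob_space) integrable_omega_mult_indicator:
  assumes "finite L" and "\<forall>i\<in>L. p i \<in> borel_measurable M" and "j \<in> L"
    and "Measurable.pred M P"
  shows "integrable M (\<lambda>x. omega V par L p j x * indicator {x. P x} x)"
proof (rule integrable_const_bound[where B="1 + card (ancestors par j)"])
  show "AE x in M. norm (omega V par L p j x * indicator {x. P x} x) \<le> 1 + card (ancestors par j)"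
    using abs_omega_at_le_card_ancestors by (intro AE_I2) (auto simp: omega_eq_omega_at indicator_def)
  show "(\<lambda>x. omega V par L p j x * indicator {x. P x} x) \<in> borel_measurable M"
    using borel_measurable_omega[OF assms(1-3)] assms(4) by measurable
qed

lemma (in prob_space) prob_atMost_uniform:
  assumes "X \<in> borel_measurable M" and "distr M lborel X = uniform_measure lborel {0..1}"
    and "0 \<le> \<alpha>" and "\<alpha> \<le> 1"
  shows "prob (X -` {..\<alpha>} \<inter> space M) = \<alpha>"
proof -
  have "prob (X -` {..\<alpha>} \<inter> space M) = measure (distr M lborel X) {..\<alpha>}"
    using assms(1) by (simp add: measure_distr)
  also have "\<dots> = \<alpha>"
    using assms(2-4) by simp
  finally show ?thesis .
qed

theorem lemma2:
  fixes M :: "'m measure" and V :: "'a set" and r :: 'a and par :: "'a \<Rightarrow> 'a"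
    and L :: "'a set" and l :: nat and j :: 'a and p :: "'a \<Rightarrow> 'm \<Rightarrow> real"
    and B :: "('a \<Rightarrow> real) set" and \<alpha> :: real
  assumes "prob_space M"
    and "rooted_tree V r par"
    and "L \<subseteq> {v \<in> V. depth par r v = l}"
    and "j \<in> L"
    and "\<forall>i\<in>L. p i \<in> borel_measurable M"
    and "distr M lborel (p j) = uniform_measure lborel {0..1}"
    and "prob_space.indep_var M (PiM {j} (\<lambda>_. borel)) (\<lambda>x. \<lambda>i\<in>{j}. p i x)
           (PiM (L - {j}) (\<lambda>_. borel))
           (\<lambda>x. \<lambda>i\<in>L - {j}. p i x)"
    and "B \<in> sets (PiM (L - {j}) (\<lambda>_. borel))"
    and "0 < \<alpha>" and "\<alpha> < 1"
  shows "integral\<^sup>L M (\<lambda>x. omega V par L p j x *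
            indicator {x. (\<lambda>i\<in>L - {j}. p i x) \<in> B \<and> p j x \<le> \<alpha>} x)
         \<le> \<alpha> / (1 - \<alpha>) * integral\<^sup>L M (\<lambda>x. omega V par L p j x *
            indicator {x. (\<lambda>i\<in>L - {j}. p i x) \<in> B \<and> p j x > \<alpha>} x)"
proof -
  interpret prob_space M by fact
  have "finite L"
    using assms(2,3) unfolding rooted_tree_def by (auto intro: finite_subset)
  have pj: "p j \<in> borel_measurable M"
    using assms(4,5) by blast
  let ?X = "\<lambda>x. \<lambda>i\<in>{j}. p i x" and ?Y = "\<lambda>x. \<lambda>i\<in>L - {j}. p i x"
  let ?A = "{u \<in> space (PiM {j} (\<lambda>_. borel)). u j \<le> \<alpha>}"
  have Y: "?Y \<in> measurable M (PiM (L - {j}) (\<lambda>_. borel))"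
    using assms(5) by (intro measurable_restrict) auto
  have "?X -` ?A \<inter> space M = p j -` {..\<alpha>} \<inter> space M"
    by (auto simp: space_PiM)
  then have prob_A: "prob (?X -` ?A \<inter> space M) = \<alpha>"
    using prob_atMost_uniform[OF pj assms(6)] assms(9,10) by simp
  show ?thesis
  proof (rule indep_var_threshold_bound[OF assms(7) _ prob_A \<open>\<alpha> < 1\<close>, where
        g="\<lambda>y. omega_at V par L j y \<alpha> * indicator B y" and C="1 + card (ancestors par j)"])
    show "?A \<in> sets (PiM {j} (\<lambda>_. borel))"
      by measurable
    show "(\<lambda>y. omega_at V par L j y \<alpha> * indicator B y) \<in> borel_measurable (PiM (L - {j}) (\<lambda>_. borel))"
      using borel_measurable_omega_at[OF \<open>finite L\<close>] assms(8) by measurable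
    show "\<bar>omega_at V par L j y \<alpha> * indicator B y\<bar> \<le> 1 + card (ancestors par j)" for y
      using abs_omega_at_le_card_ancestors by (auto simp: indicator_def)
    show "integrable M (\<lambda>x. omega V par L p j x * indicator {x. ?Y x \<in> B \<and> p j x \<le> \<alpha>} x)"
      "integrable M (\<lambda>x. omega V par L p j x * indicator {x. ?Y x \<in> B \<and> p j x > \<alpha>} x)"
      using \<open>finite L\<close> assms(5,4) Y pj assms(8) by (auto intro!: integrable_omega_mult_indicator)
    have "?X x \<in> space (PiM {j} (\<lambda>_. borel))" for x
      by (simp add: space_PiM)
    then show "omega V par L p j x * indicator {x. ?Y x \<in> B \<and> p j x \<le> \<alpha>} x
        \<le> omega_at V par L j (?Y x) \<alpha> * indicator B (?Y x) * indicator ?A (?X x)"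
      and "omega_at V par L j (?Y x) \<alpha> * indicator B (?Y x) * indicator (- ?A) (?X x)
        \<le> omega V par L p j x * indicator {x. ?Y x \<in> B \<and> p j x > \<alpha>} x" for x
      using omega_at_mono[of "p j x" \<alpha>] omega_at_mono[of \<alpha> "p j x"]
      by (auto simp: omega_eq_omega_at indicator_def)
  qed
qed

end
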